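(* Let $n\ge 5$ and let $G$ be an almost simple primitive permutation group with socle $G_0=\mathrm{PSU}_n(q)$ acting on the set $X$ of all non-degenerate $1$-dimensional subspaces of the natural module $V_n(q^2)$. Then $\mathrm{diam}(X,G)=2$.
   Context: $V_n(q^2)$ carries a non-degenerate hermitian (unitary) form $f$; a $1$-space $\langle v\rangle$ is non-degenerate iff $f(v,v)\ne 0$. An (undirected) orbital graph of $(X,G)$ is a graph on $X$ whose edge set is a single $G$-orbit on unordered $2$-subsets of $X$, and $\mathrm{diam}(X,G)$ is the maximum diameter of all such orbital graphs. *)

theory Defs
  imports "HOL-Analysis.Analysis" "HOL-Library.Extended_Nat"
begin

text \<open>Standard non-degenerate hermitian form on V_n(q^2) = 'k^'n, with CARD('k) = q^2:
  f(u,v) = sum_i u_i * v_i^q.\<close>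
definition herm :: "nat \<Rightarrow> ('k::field)^'n \<Rightarrow> 'k^'n \<Rightarrow> 'k" where
  "herm q u v = (\<Sum>i\<in>UNIV. u$i * (v$i)^q)"

definition span1 :: "('k::field)^'n \<Rightarrow> ('k^'n) set" where
  "span1 v = {(\<chi> i. c * v$i) | c. True}"

definition nondeg_points :: "nat \<Rightarrow> (('k::field)^'n) set set" where
  "nondeg_points q = {span1 v | v. herm q v v \<noteq> 0}"

definition field_aut :: "('k::field \<Rightarrow> 'k) \<Rightarrow> bool" where
  "field_aut \<sigma> \<longleftrightarrow> bij \<sigma> \<and> (\<forall>x y. \<sigma> (x + y) = \<sigma> x + \<sigma> y) \<and> (\<forall>x y. \<sigma> (x * y) = \<sigma> x * \<sigma> y)"

definition GammaU :: "nat \<Rightarrow> (('k::field)^'n \<Rightarrow> 'k^'n) set" where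
  "GammaU q = {(\<lambda>v. A *v (\<chi> i. \<sigma> (v$i))) | A \<sigma>. field_aut \<sigma> \<and>
     (\<exists>m. m \<noteq> 0 \<and> (\<forall>u v. herm q (A *v (\<chi> i. \<sigma> (u$i))) (A *v (\<chi> i. \<sigma> (v$i)))
                          = m * \<sigma> (herm q u v)))}"

definition SU :: "nat \<Rightarrow> (('k::field)^'n \<Rightarrow> 'k^'n) set" where
  "SU q = {(\<lambda>v. A *v v) | A. det A = 1 \<and> (\<forall>u v. herm q (A *v u) (A *v v) = herm q u v)}"

definition induced :: "'p set set \<Rightarrow> ('p \<Rightarrow> 'p) \<Rightarrow> 'p set \<Rightarrow> 'p set" where
  "induced X g = (\<lambda>P. if P \<in> X then g ` P else P)"

definition primitive_on :: "'x set \<Rightarrow> ('x \<Rightarrow> 'x) set \<Rightarrow> bool" where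
  "primitive_on X G \<longleftrightarrow> (\<forall>x\<in>X. \<forall>y\<in>X. \<exists>g\<in>G. g x = y) \<and>
     (\<forall>B. B \<subseteq> X \<longrightarrow> (\<forall>g\<in>G. g ` B = B \<or> g ` B \<inter> B = {}) \<longrightarrow> card B \<le> 1 \<or> B = X)"

fun reach :: "'x set set \<Rightarrow> nat \<Rightarrow> 'x \<Rightarrow> 'x \<Rightarrow> bool" where
  "reach E 0 x y = (x = y)"
| "reach E (Suc k) x y = (\<exists>z. {x, z} \<in> E \<and> reach E k z y)"

definition gdist :: "'x set set \<Rightarrow> 'x \<Rightarrow> 'x \<Rightarrow> enat" where
  "gdist E x y = (if \<exists>k. reach E k x y then enat (LEAST k. reach E k x y) else \<infinity>)"

definition graph_diam :: "'x set \<Rightarrow> 'x set set \<Rightarrow> enat" where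
  "graph_diam X E = (SUP x\<in>X. SUP y\<in>X. gdist E x y)"

definition orbital_edge_sets :: "'x set \<Rightarrow> ('x \<Rightarrow> 'x) set \<Rightarrow> 'x set set set" where
  "orbital_edge_sets X G = {{g ` A | g. g \<in> G} | A. A \<subseteq> X \<and> card A = 2}"

definition action_diam :: "'x set \<Rightarrow> ('x \<Rightarrow> 'x) set \<Rightarrow> enat" where
  "action_diam X G = (SUP E\<in>orbital_edge_sets X G. graph_diam X E)"

end

theory Submission
  imports Defs "HOL-Computational_Algebra.Primes" "HOL-Computational_Algebra.Polynomial"
begin

(* Distinct non-degenerate points <a>, <b> have a type: None if f(a,b) = 0, and otherwise
   f(a,a) f(b,b) / (f(a,b) f(b,a)) - 1, an element of F_q other than -1.  Unitary reflections,
   corrected by a diagonal matrix to determinant 1, move a vector to any vector of the same norm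
   while fixing a vector orthogonal to both; this brings every pair of points of type t into a
   normal form (<e_1>, <K_t>), so pairs of equal type lie in one SU_n(q)-orbital.  For any types
   t and T an explicit non-degenerate z makes (<e_1>, <z>) and (<z>, <K_t>) both of type T, so
   every orbital graph has diameter at most 2.  Semisimilarities preserve orthogonality, so the
   orbital graph of an orthogonal pair is not complete, and the diameter is exactly 2.  Four
   coordinates suffice throughout. *)

section \<open>Finite fields of order \<open>q\<^sup>2\<close>\<close>

lemma finite_field_power_card_eq_self:
  fixes x :: "'a::{field,finite}"
  shows "x ^ CARD('a) = x"
proof (cases "x = 0")
  case False
  define U where "U = UNIV - {0::'a}"
  have "(\<Prod>y\<in>U. x * y) = (\<Prod>y\<in>U. y)"
    using False by (intro prod.reindex_bij_witness[of _ "\<lambda>y. y / x" "\<lambda>y. x * y"]) (auto simp: U_def)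
  then have "x ^ card U * \<Prod>U = 1 * \<Prod>U"
    by (simp add: prod.distrib)
  moreover have "\<Prod>U \<noteq> 0"
    by (simp add: U_def)
  ultimately have "x ^ card U = 1"
    by (metis mult_cancel_right)
  moreover have "CARD('a) = Suc (card U)"
    using finite_UNIV_card_ge_0[where 'a='a] by (simp add: U_def card_Diff_singleton)
  ultimately show ?thesis
    by simp
qed (simp add: finite_UNIV_card_ge_0)

lemma of_nat_CARD_eq_0: "of_nat CARD('a::{comm_ring_1,finite}) = (0::'a)"
proof -
  have "(\<Sum>x\<in>(UNIV::'a set). x + 1) = (\<Sum>x\<in>UNIV. x)"
    by (rule sum.reindex_bij_witness[of _ "\<lambda>y. y - 1" "\<lambda>y. y + 1"]) auto
  then show ?thesis
    by (simp add: sum.distrib)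
qed

lemma CHAR_eq_prime_of_card:
  assumes "prime p" "CARD('a::{field,finite}) = p ^ m"
  shows "CHAR('a) = p"
proof -
  have "prime CHAR('a)"
    by (intro prime_CHAR_semidom finite_imp_CHAR_pos) simp
  moreover have "CHAR('a) dvd p ^ m"
    using of_nat_CARD_eq_0[where 'a='a] assms(2) of_nat_eq_0_iff_char_dvd by metis
  ultimately show ?thesis
    using assms(1) by (metis prime_dvd_power primes_dvd_imp_eq)
qed

lemma card_roots_of_unity_le:
  assumes "m \<ge> 1"
  shows "card {x::'a::idom. x ^ m = 1} \<le> m"
proof -
  define P :: "'a poly" where "P = monom 1 m - 1"
  have "coeff P m = 1"
    using assms by (simp add: P_def coeff_monom)
  then have "P \<noteq> 0"
    by auto
  moreover have "degree P \<le> m"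
    unfolding P_def by (metis degree_diff_le degree_monom_le degree_1 le0)
  moreover have "{x::'a. x ^ m = 1} = {x. poly P x = 0}"
    by (auto simp: P_def poly_monom)
  ultimately show ?thesis
    using card_poly_roots_bound[of P] by simp
qed

lemma card_power_fibre:
  fixes x0 :: "'a::{field,finite}"
  assumes "m > 0" "x0 \<noteq> 0"
  shows "card {x. x \<noteq> 0 \<and> x ^ m = x0 ^ m} = card {x::'a. x ^ m = 1}"
proof -
  have "{x. x \<noteq> 0 \<and> x ^ m = x0 ^ m} = (\<lambda>k. x0 * k) ` {x. x ^ m = 1}"
  proof (intro set_eqI iffI)
    fix x assume "x \<in> {x. x \<noteq> 0 \<and> x ^ m = x0 ^ m}"
    then have "x = x0 * (x / x0)" "(x / x0) ^ m = 1"
      using assms(2) by (auto simp: power_divide)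
    then show "x \<in> (\<lambda>k. x0 * k) ` {x. x ^ m = 1}"
      by blast
  next
    fix x assume "x \<in> (\<lambda>k. x0 * k) ` {x. x ^ m = 1}"
    then obtain k where "k ^ m = 1" "x = x0 * k"
      by auto
    moreover have "k \<noteq> 0"
      using \<open>k ^ m = 1\<close> assms(1) by (metis power_0_left zero_neq_one less_numeral_extra(3))
    ultimately show "x \<in> {x. x \<noteq> 0 \<and> x ^ m = x0 ^ m}"
      using assms(2) by (simp add: power_mult_distrib)
  qed
  moreover have "inj_on (\<lambda>k. x0 * k) {x. x ^ m = 1}"
    using assms(2) by (auto simp: inj_on_def)
  ultimately show ?thesis
    by (simp add: card_image)
qed

lemma card_nonzero_eq_card_power_image_mult:
  fixes m :: nat
  assumes "m > 0"
  defines "U \<equiv> UNIV - {0::'a::{field,finite}}"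
  shows "card U = card ((\<lambda>x. x ^ m) ` U) * card {x::'a. x ^ m = 1}"
proof -
  have "U = (\<Union>t\<in>(\<lambda>x. x ^ m) ` U. {x. x \<noteq> 0 \<and> x ^ m = t})"
    by (auto simp: U_def)
  also have "card \<dots> = (\<Sum>t\<in>(\<lambda>x. x ^ m) ` U. card {x. x \<noteq> 0 \<and> x ^ m = t})"
    by (rule card_UN_disjoint) auto
  also have "\<dots> = (\<Sum>t\<in>(\<lambda>x. x ^ m) ` U. card {x::'a. x ^ m = 1})"
    using card_power_fibre[OF assms(1)] by (intro sum.cong) (auto simp: U_def)
  finally show ?thesis
    by simp
qed

locale unitary_field =
  fixes q :: nat and field :: "'k::{field,finite} itself"
  assumes card_field: "CARD('k) = q\<^sup>2"
    and frob_add: "((x::'k) + y) ^ q = x ^ q + y ^ q"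
begin

lemma q_ge_2: "2 \<le> q"
proof -
  have "card {0, 1::'k} \<le> CARD('k)"
    by (rule card_mono) auto
  then have "2 \<le> q\<^sup>2"
    by (simp add: card_field)
  moreover have "q\<^sup>2 \<le> 1" if "q \<le> 1"
    using that by (metis One_nat_def le_Suc_eq le_zero_eq one_power2 order_refl zero_le_numeral zero_power2)
  ultimately show ?thesis
    by linarith
qed

lemma q_gt_0 [simp]: "0 < q"
  using q_ge_2 by simp

lemma frob_0 [simp]: "(0::'k) ^ q = 0"
  by (simp add: power_0_left)

lemma frob_frob [simp]: "((x::'k) ^ q) ^ q = x"
  using finite_field_power_card_eq_self[of x] by (simp add: card_field power2_eq_square power_mult)

lemma frob_inj: "(x::'k) ^ q = y ^ q \<longleftrightarrow> x = y"
  by (metis frob_frob)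

lemma frob_minus: "(- (x::'k)) ^ q = - (x ^ q)"
  using frob_add[of "-x" x] by (simp add: eq_neg_iff_add_eq_0)

lemma frob_diff: "((x::'k) - y) ^ q = x ^ q - y ^ q"
  using frob_add[of x "-y"] by (simp add: frob_minus)

lemma frob_sum: "(\<Sum>i\<in>A. f i :: 'k) ^ q = (\<Sum>i\<in>A. f i ^ q)"
  by (induction A rule: infinite_finite_induct) (simp_all add: frob_add)

lemma norm_frob: "((x::'k) * x ^ q) ^ q = x * x ^ q"
  by (simp add: power_mult_distrib mult.commute)

lemma card_frob_fixed_nonzero_le: "card {t::'k. t \<noteq> 0 \<and> t ^ q = t} \<le> q - 1"
proof -
  have "{t::'k. t \<noteq> 0 \<and> t ^ q = t} \<subseteq> {t. t ^ (q - 1) = 1}"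
  proof
    fix t :: 'k assume "t \<in> {t. t \<noteq> 0 \<and> t ^ q = t}"
    then have "t \<noteq> 0" "t * t ^ (q - 1) = t * 1"
      by (auto simp flip: power_Suc)
    then show "t \<in> {t. t ^ (q - 1) = 1}"
      by simp
  qed
  then have "card {t::'k. t \<noteq> 0 \<and> t ^ q = t} \<le> card {t::'k. t ^ (q - 1) = 1}"
    by (intro card_mono) simp_all
  also have "\<dots> \<le> q - 1"
    using q_ge_2 by (intro card_roots_of_unity_le) simp
  finally show ?thesis .
qed

text \<open>The norm \<open>x \<mapsto> x * x ^ q = x ^ (q + 1)\<close> maps the \<open>q\<^sup>2 - 1\<close> nonzero elements onto the
  at most \<open>q - 1\<close> nonzero fixed points of the Frobenius, with kernel of size at most \<open>q + 1\<close>;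
  counting forces both bounds to be attained.\<close>
lemma norm_image_and_kernel:
  "(\<lambda>x. x ^ (q + 1)) ` (UNIV - {0}) = {t::'k. t \<noteq> 0 \<and> t ^ q = t}"
  "card {x::'k. x ^ (q + 1) = 1} = q + 1"
proof -
  define I where "I = (\<lambda>x. x ^ (q + 1)) ` (UNIV - {0::'k})"
  define F where "F = {t::'k. t \<noteq> 0 \<and> t ^ q = t}"
  define K where "K = {x::'k. x ^ (q + 1) = 1}"
  have "I \<subseteq> F"
    using norm_frob by (auto simp: I_def F_def mult.commute)
  have "card F \<le> q - 1"
    unfolding F_def by (rule card_frob_fixed_nonzero_le)
  then have I_le: "card I \<le> q - 1"
    using card_mono[OF _ \<open>I \<subseteq> F\<close>] by simp
  have K_le: "card K \<le> q + 1"
    unfolding K_def by (rule card_roots_of_unity_le) simp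
  have eq: "card I * card K = (q - 1) * (q + 1)"
    using card_nonzero_eq_card_power_image_mult[of "q + 1", where 'a='k]
    by (simp add: I_def K_def card_Diff_singleton card_field power2_eq_square algebra_simps)
  have "(q - 1) * (q + 1) \<le> card I * (q + 1)"
    unfolding eq[symmetric] using K_le by (rule mult_le_mono2)
  then have "card I = q - 1"
    using I_le by (metis le_antisym mult_le_cancel2 zero_less_Suc add.commute plus_1_eq_Suc)
  have "(q - 1) * (q + 1) \<le> (q - 1) * card K"
    unfolding eq[symmetric] using I_le by (rule mult_le_mono1)
  moreover have "0 < q - 1"
    using q_ge_2 by simp
  ultimately have "card K = q + 1"
    using K_le by (metis le_antisym mult_le_cancel1 not_less0)
  show "card K = q + 1"
    by fact
  have "card F \<le> card I"
    using \<open>card F \<le> q - 1\<close> \<open>card I = q - 1\<close> by simp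
  then show "I = F"
    using \<open>I \<subseteq> F\<close> card_mono[OF _ \<open>I \<subseteq> F\<close>] by (intro card_subset_eq) auto
qed

lemma norm_onto_fixed: "(t::'k) ^ q = t \<Longrightarrow> \<exists>x. x * x ^ q = t"
proof (cases "t = 0")
  case False
  assume "t ^ q = t"
  with False have "t \<in> (\<lambda>x. x ^ (q + 1)) ` (UNIV - {0})"
    unfolding norm_image_and_kernel(1) by simp
  then obtain x where "t = x ^ (q + 1)"
    by blast
  then show ?thesis
    by (auto simp: mult.commute)
qed (auto intro: exI[of _ 0])

lemma exists_norm_one_ne_one: "\<exists>z::'k. z * z ^ q = 1 \<and> z \<noteq> 1"
proof -
  have "card {1::'k} < card {x::'k. x ^ (q + 1) = 1}"
    using norm_image_and_kernel(2) q_ge_2 by simp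
  then obtain z :: 'k where "z ^ (q + 1) = 1" "z \<noteq> 1"
    by (metis (mono_tags, lifting) card_mono finite mem_Collect_eq not_le singletonI subsetI)
  then show ?thesis
    by (auto simp: mult.commute)
qed

lemma exists_norm_one_plus_multiple:
  assumes "(s::'k) ^ q = s" "1 + s \<noteq> 0"
  obtains \<beta> where "(1 + \<beta> * s) * (1 + \<beta> * s) ^ q = 1 + s"
proof (cases "s = 0")
  case False
  have "(1 + s) ^ q = 1 + s"
    using assms(1) by (simp add: frob_add)
  then obtain \<gamma> where "\<gamma> * \<gamma> ^ q = 1 + s"
    using norm_onto_fixed by blast
  then show ?thesis
    using that[of "(\<gamma> - 1) / s"] False by simp
qed (use that in simp)

end

lemma unitary_field_prime_power:
  assumes "prime p" "CARD('k::{field,finite}) = (p ^ e)\<^sup>2"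
  shows "unitary_field TYPE('k) (p ^ e)"
proof
  have "CHAR('k) = p"
    using CHAR_eq_prime_of_card[OF assms(1), of "e * 2"] assms(2) by (simp add: power_mult)
  then show "(x + y) ^ p ^ e = x ^ p ^ e + y ^ p ^ e" for x y :: 'k
    using assms(1) by (intro freshmans_dream') auto
qed (rule assms(2))

section \<open>The hermitian form and unitary matrices\<close>

lemma axis_component [simp]: "axis i c $ j = (if j = i then c else 0)"
  by (simp add: axis_def)

lemma axis_eq_scale: "axis i c = c *s axis i (1::'a::semiring_1)"
  by (simp add: vec_eq_iff)

lemma span1_eq_range: "span1 v = range (\<lambda>c. c *s v)"
  by (auto simp: span1_def vector_scalar_mult_def)

lemma span1_self: "v \<in> span1 v"
  unfolding span1_eq_range by (metis rangeI scaleR_one vector_smult_lid)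

lemma span1_scale: "(c::'a::field) \<noteq> 0 \<Longrightarrow> span1 (c *s v) = span1 (v::'a^'n)"
  unfolding span1_eq_range
proof (intro set_eqI iffI)
  fix x assume "c \<noteq> 0" "x \<in> range (\<lambda>c. c *s v)"
  then obtain d where "x = d *s v"
    by auto
  then have "x = (d / c) *s (c *s v)"
    using \<open>c \<noteq> 0\<close> by (simp add: vector_smult_assoc)
  then show "x \<in> range (\<lambda>d. d *s (c *s v))"
    by blast
qed (auto simp: vector_smult_assoc)

lemma image_span1_matrix: "(\<lambda>v. A *v v) ` span1 v = span1 (A *v v)"
  unfolding span1_eq_range by (auto simp: vector_scalar_commute image_iff)

lemma span1_eqD: "span1 a = span1 b \<Longrightarrow> \<exists>c. b = c *s a"
  using span1_self[of b] unfolding span1_eq_range by auto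

lemma span1_neq: "(x::'a::field^'n) $ i = 0 \<Longrightarrow> y $ i \<noteq> 0 \<Longrightarrow> span1 x \<noteq> span1 y"
  using span1_eqD[of x y] by auto

context unitary_field
begin

lemma herm_add_left: "herm q (u + v) (w::'k^'n) = herm q u w + herm q v w"
  by (simp add: herm_def distrib_right sum.distrib)

lemma herm_add_right: "herm q (u::'k^'n) (v + w) = herm q u v + herm q u w"
  by (simp add: herm_def frob_add distrib_left sum.distrib)

lemma herm_scale_left: "herm q (c *s u) (w::'k^'n) = c * herm q u w"
  by (simp add: herm_def sum_distrib_left mult.assoc)

lemma herm_scale_right: "herm q (u::'k^'n) (c *s w) = c ^ q * herm q u w"
  by (simp add: herm_def sum_distrib_left power_mult_distrib mult_ac)

lemma herm_diff_left: "herm q (u - v) (w::'k^'n) = herm q u w - herm q v w"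
  by (simp add: herm_def left_diff_distrib sum_subtractf)

lemma herm_diff_right: "herm q (u::'k^'n) (v - w) = herm q u v - herm q u w"
  by (simp add: herm_def frob_diff right_diff_distrib sum_subtractf)

lemma herm_zero_left [simp]: "herm q 0 (w::'k^'n) = 0"
  by (simp add: herm_def)

lemma herm_zero_right [simp]: "herm q (u::'k^'n) 0 = 0"
  by (simp add: herm_def)

lemma herm_sym: "herm q (v::'k^'n) u = herm q u v ^ q"
  by (simp add: herm_def frob_sum power_mult_distrib mult.commute)

lemma herm_self_frob: "herm q (u::'k^'n) u ^ q = herm q u u"
  using herm_sym[of u u] by simp

lemma herm_axis_right: "herm q (u::'k^'n) (axis i c) = u $ i * c ^ q"
proof -
  have "herm q u (axis i c) = (\<Sum>j\<in>UNIV. if j = i then u $ i * c ^ q else 0)"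
    unfolding herm_def by (intro sum.cong) auto
  then show ?thesis
    by simp
qed

lemma herm_axis_left: "herm q (axis i c) (u::'k^'n) = c * (u $ i) ^ q"
  by (simp add: herm_sym[of "axis i c"] herm_axis_right power_mult_distrib mult.commute)

lemma herm_nondegenerate: "(\<And>y. herm q (x::'k^'n) y = 0) \<Longrightarrow> x = 0"
  by (metis herm_axis_right mult_1 power_one vec_eq_iff zero_index mult.commute)

definition unitary :: "'k^'n^'n \<Rightarrow> bool" where
  "unitary A \<longleftrightarrow> (\<forall>u v. herm q (A *v u) (A *v v) = herm q u v)"

definition special_unitary :: "'k^'n^'n \<Rightarrow> bool" where
  "special_unitary A \<longleftrightarrow> unitary A \<and> det A = 1"

definition conj_transpose :: "'k^'n^'n \<Rightarrow> 'k^'n^'n" where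
  "conj_transpose A = (\<chi> i j. (A $ j $ i) ^ q)"

lemma herm_conj_transpose: "herm q (A *v u) v = herm q u (conj_transpose A *v v)"
proof -
  have "herm q (A *v u) v = (\<Sum>i\<in>UNIV. \<Sum>j\<in>UNIV. A $ i $ j * u $ j * (v $ i) ^ q)"
    by (simp add: herm_def matrix_vector_mult_def sum_distrib_right)
  also have "\<dots> = (\<Sum>j\<in>UNIV. \<Sum>i\<in>UNIV. A $ i $ j * u $ j * (v $ i) ^ q)"
    by (rule sum.swap)
  also have "\<dots> = herm q u (conj_transpose A *v v)"
    by (simp add: herm_def matrix_vector_mult_def conj_transpose_def sum_distrib_left frob_sum
        power_mult_distrib mult_ac)
  finally show ?thesis .
qed

lemma unitary_conj_transpose_mult:
  assumes "unitary A"
  shows "conj_transpose A *v (A *v v) = v"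
proof -
  have "herm q (conj_transpose A *v (A *v v) - v) y = 0" for y
  proof -
    have "herm q y (conj_transpose A *v (A *v v)) = herm q y v"
      using assms by (simp flip: herm_conj_transpose add: unitary_def)
    then show ?thesis
      by (metis herm_diff_left herm_sym right_minus_eq)
  qed
  then show ?thesis
    using herm_nondegenerate by (metis right_minus_eq)
qed

lemma unitary_mult_conj_transpose:
  assumes "unitary A"
  shows "A *v (conj_transpose A *v v) = v"
proof -
  have "inj ((*v) A)"
    by (metis injI unitary_conj_transpose_mult[OF assms])
  then obtain w where "v = A *v w"
    using finite_UNIV_inj_surj by (metis finite_class.finite_UNIV surjD)
  then show ?thesis
    by (simp add: unitary_conj_transpose_mult[OF assms])
qed

lemma unitary_conj_transpose: "unitary A \<Longrightarrow> unitary (conj_transpose A)"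
  by (metis unitary_def unitary_mult_conj_transpose)

lemma det_conj_transpose: "det (conj_transpose A) = det A ^ q"
proof -
  have sign: "(of_int (sign p) :: 'k) ^ q = of_int (sign p)" for p :: "'n \<Rightarrow> 'n"
    by (cases "sign p = 1") (auto simp: sign_def frob_minus)
  have "conj_transpose A = transpose (\<chi> i j. (A $ i $ j) ^ q)"
    by (simp add: conj_transpose_def transpose_def)
  then have "det (conj_transpose A) = det (\<chi> i j. (A $ i $ j) ^ q)"
    by (simp add: det_transpose)
  then show ?thesis
    by (simp add: det_def frob_sum power_mult_distrib sign prod_power_distrib)
qed

lemma unitary_matrix_mul: "unitary A \<Longrightarrow> unitary B \<Longrightarrow> unitary (A ** B)"
  by (simp add: unitary_def flip: matrix_vector_mul_assoc)

lemma unitary_det_norm: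
  assumes "unitary A"
  shows "det A * det A ^ q = 1"
proof -
  have "conj_transpose A ** A = mat 1"
    by (simp add: matrix_eq unitary_conj_transpose_mult[OF assms] flip: matrix_vector_mul_assoc)
  then have "det (conj_transpose A) * det A = 1"
    by (metis det_I det_mul)
  then show ?thesis
    by (simp add: det_conj_transpose mult.commute)
qed

lemma special_unitary_matrix_mul:
  "special_unitary A \<Longrightarrow> special_unitary B \<Longrightarrow> special_unitary (A ** B)"
  by (simp add: special_unitary_def unitary_matrix_mul det_mul)

lemma special_unitary_conj_transpose: "special_unitary A \<Longrightarrow> special_unitary (conj_transpose A)"
  by (simp add: special_unitary_def unitary_conj_transpose det_conj_transpose)

lemma unitary_span1_eq_iff:
  assumes "unitary A"
  shows "span1 (A *v x) = span1 (A *v y) \<longleftrightarrow> span1 x = span1 y"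
proof
  assume "span1 (A *v x) = span1 (A *v y)"
  then have "(\<lambda>v. conj_transpose A *v v) ` span1 (A *v x) = (\<lambda>v. conj_transpose A *v v) ` span1 (A *v y)"
    by simp
  then show "span1 x = span1 y"
    by (simp add: image_span1_matrix unitary_conj_transpose_mult[OF assms])
qed (simp flip: image_span1_matrix)

end

section \<open>Moving vectors by unitary maps\<close>

context unitary_field
begin

definition diag_at :: "'n \<Rightarrow> 'k \<Rightarrow> 'k^'n^'n" where
  "diag_at l d = (\<chi> i j. if i = j then (if i = l then d else 1) else 0)"

lemma diag_at_mult_vec: "diag_at l d *v y = (\<chi> i. (if i = l then d else 1) * y $ i)"
proof -
  have "(\<Sum>j\<in>UNIV. (if i = j then (if i = l then d else 1) else 0) * y $ j) =
      (if i = l then d else 1) * y $ i" for i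
    by (simp add: if_distrib[of "\<lambda>x. x * _"] cong: if_cong)
  then show ?thesis
    by (simp add: diag_at_def matrix_vector_mult_def)
qed

lemma det_diag_at: "det (diag_at l d) = d"
proof -
  have "det (diag_at l d) = (\<Prod>i\<in>UNIV. if i = l then d else 1)"
    by (subst det_diagonal) (auto simp: diag_at_def)
  then show ?thesis
    by simp
qed

lemma unitary_diag_at:
  assumes "d * d ^ q = 1"
  shows "unitary (diag_at l d)"
proof -
  have entry: "(if i = l then d else 1) * x * ((if i = l then d else 1) * y) ^ q = x * y ^ q" for i x y
    using assms by (simp add: power_mult_distrib)
  show ?thesis
    unfolding unitary_def herm_def diag_at_mult_vec vec_lambda_beta by (simp only: entry simp_thms)
qed

text \<open>Correcting the determinant by a diagonal unitary matrix acting on coordinate \<open>l\<close> only.\<close>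
lemma special_unitary_agreeing_off:
  assumes "unitary A"
  obtains B where "special_unitary B" "\<And>y. (A *v y) $ l = 0 \<Longrightarrow> B *v y = A *v y"
proof -
  define d where "d = det A"
  have "d * d ^ q = 1"
    using unitary_det_norm[OF assms] by (simp add: d_def)
  then have "d \<noteq> 0" "inverse d * inverse d ^ q = 1"
    by (auto simp: power_inverse simp flip: inverse_mult_distrib)
  then have "special_unitary (diag_at l (inverse d) ** A)"
    using assms unitary_diag_at[of "inverse d" l]
    by (simp add: special_unitary_def unitary_matrix_mul det_mul det_diag_at d_def)
  moreover have "(diag_at l (inverse d) ** A) *v y = A *v y" if "(A *v y) $ l = 0" for y
    using that by (simp add: diag_at_mult_vec vec_eq_iff flip: matrix_vector_mul_assoc)
  ultimately show ?thesis
    using that by blast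
qed

definition reflection :: "'k^'n \<Rightarrow> 'k \<Rightarrow> 'k^'n^'n" where
  "reflection a c = mat 1 + (\<chi> i j. c * a $ i * (a $ j) ^ q)"

lemma reflection_mult_vec: "reflection a c *v x = x + (c * herm q x a) *s a"
proof -
  have "(\<chi> i j. c * a $ i * (a $ j) ^ q) *v x = (c * herm q x a) *s a"
    by (simp add: matrix_vector_mult_def herm_def vec_eq_iff sum_distrib_left mult_ac)
  then show ?thesis
    by (simp add: reflection_def matrix_vector_mult_add_rdistrib)
qed

lemma unitary_reflection:
  fixes a :: "'k^'n"
  assumes "r ^ q + r + r * r ^ q * herm q a a = 0"
  shows "unitary (reflection a r)"
  unfolding unitary_def reflection_mult_vec
proof (intro allI)
  fix x y :: "'k^'n"
  have "herm q (x + (r * herm q x a) *s a) (y + (r * herm q y a) *s a) =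
      herm q x y + herm q x a * (herm q y a) ^ q * (r ^ q + r + r * r ^ q * herm q a a)"
    by (simp add: herm_add_left herm_add_right herm_scale_left herm_scale_right
        herm_sym[of a y] power_mult_distrib algebra_simps)
  then show "herm q (x + (r * herm q x a) *s a) (y + (r * herm q y a) *s a) = herm q x y"
    using assms by simp
qed

definition moves_fixing :: "'k^'n \<Rightarrow> 'k^'n \<Rightarrow> 'k^'n \<Rightarrow> bool" where
  "moves_fixing e u c \<longleftrightarrow> (\<exists>A. unitary A \<and> A *v e = e \<and> A *v u = c)"

lemma moves_fixing_trans: "moves_fixing e u v \<Longrightarrow> moves_fixing e v c \<Longrightarrow> moves_fixing e u c"
  unfolding moves_fixing_def by (metis matrix_vector_mul_assoc unitary_matrix_mul)

text \<open>The reflection in \<open>a = c - u\<close> with the scalar below is an isometry because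
  \<open>d + d ^ q + herm q a a = 0\<close> for \<open>d = herm q u a\<close>; it fixes \<open>u\<^sup>\<bottom> \<inter> c\<^sup>\<bottom>\<close> pointwise.\<close>
lemma moves_fixing_by_reflection:
  fixes u c e :: "'k^'n"
  assumes "herm q u u = herm q c c" "herm q u c \<noteq> herm q u u" "herm q e u = 0" "herm q e c = 0"
  shows "moves_fixing e u c"
proof -
  define a where "a = c - u"
  define d where "d = herm q u a"
  have "d \<noteq> 0"
    using assms(2) by (simp add: d_def a_def herm_diff_right)
  have key: "d + d ^ q + herm q a a = 0"
  proof -
    have "d ^ q = herm q a u"
      by (simp add: d_def herm_sym[of a u])
    moreover have "herm q a u + herm q c a = 0"
      using assms(1) by (simp add: a_def herm_diff_left herm_diff_right herm_sym[of c u])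
    ultimately show ?thesis
      by (simp add: d_def a_def herm_diff_left herm_diff_right)
  qed
  define r where "r = inverse d"
  have "r ^ q + r + r * r ^ q * herm q a a = (d + d ^ q + herm q a a) / (d * d ^ q)"
    using \<open>d \<noteq> 0\<close> by (simp add: r_def power_inverse field_simps)
  then have r: "r ^ q + r + r * r ^ q * herm q a a = 0"
    using key by simp
  have "unitary (reflection a r)"
    using r by (rule unitary_reflection)
  moreover have "reflection a r *v u = c"
    using \<open>d \<noteq> 0\<close> by (simp add: reflection_mult_vec r_def flip: d_def) (simp add: a_def)
  moreover have "reflection a r *v e = e"
    using assms(3,4) by (simp add: reflection_mult_vec a_def herm_diff_right)
  ultimately show ?thesis
    unfolding moves_fixing_def by blast
qed

lemma special_unitary_if_moves_fixing:
  assumes "moves_fixing e u c" "c $ l = 0" "e $ l = 0"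
  obtains B where "special_unitary B" "B *v e = e" "B *v u = c"
proof -
  obtain A where A: "unitary A" "A *v e = e" "A *v u = c"
    using assms(1) unfolding moves_fixing_def by blast
  obtain B where "special_unitary B" "\<And>y. (A *v y) $ l = 0 \<Longrightarrow> B *v y = A *v y"
    using special_unitary_agreeing_off[OF A(1)] by blast
  then show ?thesis
    using that A assms(2,3) by metis
qed

text \<open>If one reflection does not suffice, pass through \<open>axis j (z * g)\<close> with \<open>z\<close> of norm one.\<close>
lemma moves_fixing_to_axis:
  fixes u e :: "'k^'n"
  assumes "herm q u u = g * g ^ q" "g \<noteq> 0" "herm q e u = 0" "e $ j = 0"
  shows "moves_fixing e u (axis j g)"
proof -
  define t where "t = g * g ^ q"
  have "t \<noteq> 0"
    using assms(2) by (simp add: t_def)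
  have c: "herm q (axis j g) (axis j g) = t" "herm q e (axis j g) = 0"
    using assms(4) by (simp_all add: herm_axis_right t_def)
  show ?thesis
  proof (cases "herm q u (axis j g) = t")
    case False
    then show ?thesis
      using assms c by (intro moves_fixing_by_reflection) (simp_all add: t_def)
  next
    case True
    obtain z :: 'k where z: "z * z ^ q = 1" "z \<noteq> 1"
      using exists_norm_one_ne_one by blast
    then have "z ^ q \<noteq> 1"
      by (metis frob_inj power_one)
    define v where "v = axis j (z * g)"
    have "herm q v v = t"
      using z(1) by (simp add: v_def herm_axis_right t_def power_mult_distrib)
    moreover have "herm q u v = z ^ q * t"
      using True by (simp add: v_def herm_axis_right power_mult_distrib mult_ac)
    moreover have "herm q v (axis j g) = z * t"
      by (simp add: v_def herm_axis_right t_def mult_ac)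
    moreover have "herm q e v = 0"
      using assms(4) by (simp add: v_def herm_axis_right)
    ultimately have "moves_fixing e u v" "moves_fixing e v (axis j g)"
      using assms c \<open>t \<noteq> 0\<close> \<open>z ^ q \<noteq> 1\<close> z(2)
      by (auto intro!: moves_fixing_by_reflection simp: t_def)
    then show ?thesis
      by (rule moves_fixing_trans)
  qed
qed

lemma isotropic_link_off_axes:
  fixes u e :: "'k^'n"
  assumes "w * w ^ q = -1" "j \<noteq> k" "p \<noteq> j" "p \<noteq> k" "u $ p \<noteq> 0" "e $ j = 0" "e $ p = 0"
  obtains v where "herm q v v = 0" "herm q u v \<noteq> 0" "herm q v (axis j 1 + axis k w) \<noteq> 0"
    "herm q e v = 0"
proof -
  obtain w' where w': "w' * w' ^ q = -1" "u $ p * w' ^ q + u $ j \<noteq> 0"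
  proof (cases "u $ p * w ^ q + u $ j = 0")
    case True
    obtain z :: 'k where z: "z * z ^ q = 1" "z \<noteq> 1"
      using exists_norm_one_ne_one by blast
    then have "z ^ q \<noteq> 1" "w ^ q \<noteq> 0"
      using assms(1) by (metis frob_inj power_one, auto)
    have "(z * w) * (z * w) ^ q = -1"
      using z(1) assms(1) by (simp add: power_mult_distrib) (metis mult.assoc mult.left_commute mult_1)
    moreover have "u $ p * (z * w) ^ q + u $ j = u $ p * w ^ q * (z ^ q - 1)"
      using True by (simp add: power_mult_distrib algebra_simps eq_neg_iff_add_eq_0)
    ultimately show ?thesis
      using that[of "z * w"] assms(5) \<open>w ^ q \<noteq> 0\<close> \<open>z ^ q \<noteq> 1\<close> by simp
  qed (use that assms(1) in blast)
  then show ?thesis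
    using that[of "axis p w' + axis j 1"] assms(2-7)
    by (simp add: herm_add_left herm_add_right herm_axis_left herm_axis_right)
qed

lemma isotropic_link_on_axes:
  fixes u e :: "'k^'n"
  assumes "u \<noteq> 0" "w * w ^ q = -1" "j \<noteq> k" "\<forall>p. p \<noteq> j \<longrightarrow> p \<noteq> k \<longrightarrow> u $ p = 0"
    and "herm q u (axis j 1 + axis k w) = 0" "e $ j = 0" "e $ k = 0"
  obtains v where "herm q v v = 0" "herm q u v \<noteq> 0" "herm q v (axis j 1 + axis k w) \<noteq> 0"
    "herm q e v = 0"
proof -
  note herm_simps = herm_add_left herm_add_right herm_axis_left herm_axis_right
  obtain z :: 'k where z: "z * z ^ q = 1" "z \<noteq> 1"
    using exists_norm_one_ne_one by blast
  then have "z ^ q \<noteq> 1" "w ^ q \<noteq> 0"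
    using assms(2) by (metis frob_inj power_one, auto)
  have uj: "u $ j = - (u $ k * w ^ q)"
    using assms(5) by (simp add: herm_simps eq_neg_iff_add_eq_0)
  have "u $ k \<noteq> 0"
  proof
    assume "u $ k = 0"
    then have "u $ p = 0" for p
      using assms(4) uj by (cases "p = j \<or> p = k") auto
    then show False
      using assms(1) by (simp add: vec_eq_iff)
  qed
  have zw: "(z * w) * (z * w) ^ q = -1"
    using z(1) assms(2) by (simp add: power_mult_distrib) (metis mult.assoc mult.left_commute mult_1)
  define v where "v = axis j 1 + axis k (z * w)"
  have "herm q u v = u $ k * w ^ q * (z ^ q - 1)"
    using uj by (simp add: v_def herm_simps power_mult_distrib algebra_simps)
  moreover have "herm q v (axis j 1 + axis k w) = 1 - z"
    using assms(2,3) by (simp add: v_def herm_simps power_mult_distrib mult.assoc)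
  moreover have "herm q v v = 0" "herm q e v = 0"
    using assms(3,6,7) zw by (simp_all add: v_def herm_simps)
  ultimately show ?thesis
    using that \<open>u $ k \<noteq> 0\<close> \<open>w ^ q \<noteq> 0\<close> \<open>z ^ q \<noteq> 1\<close> z(2) by simp
qed

lemma moves_fixing_isotropic:
  fixes u e :: "'k^'n"
  assumes "herm q u u = 0" "u \<noteq> 0" "w * w ^ q = -1" "j \<noteq> k"
    and "herm q e u = 0" "e $ j = 0" "e $ k = 0" "\<forall>p. u $ p \<noteq> 0 \<longrightarrow> e $ p = 0"
  shows "moves_fixing e u (axis j 1 + axis k w)"
proof -
  define c where "c = axis j 1 + axis k w"
  have c: "herm q c c = 0" "herm q e c = 0"
    using assms(3,4,6,7) by (simp_all add: c_def herm_add_left herm_add_right herm_axis_left herm_axis_right)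
  show ?thesis
  proof (cases "herm q u c = 0")
    case False
    then show ?thesis
      using assms(1,5) c by (simp add: c_def moves_fixing_by_reflection)
  next
    case True
    text \<open>Pass through an isotropic vector non-orthogonal to both \<open>u\<close> and \<open>c\<close>, supported on
      a coordinate of \<open>u\<close> off the two axes if there is one.\<close>
    obtain v where "herm q v v = 0" "herm q u v \<noteq> 0" "herm q v c \<noteq> 0" "herm q e v = 0"
    proof (cases "\<exists>p. p \<noteq> j \<and> p \<noteq> k \<and> u $ p \<noteq> 0")
      case True
      then obtain p where p: "p \<noteq> j" "p \<noteq> k" "u $ p \<noteq> 0"
        by blast
      then have "e $ p = 0"
        using assms(8) by blast
      with p show ?thesis
        using isotropic_link_off_axes[OF assms(3,4) p assms(6)] that unfolding c_def by blast
    next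
      case False
      then have "\<forall>p. p \<noteq> j \<longrightarrow> p \<noteq> k \<longrightarrow> u $ p = 0"
        by blast
      then show ?thesis
        using isotropic_link_on_axes[OF assms(2,3,4)] \<open>herm q u c = 0\<close> assms(6,7) that
        unfolding c_def by blast
    qed
    then have "moves_fixing e u v" "moves_fixing e v c"
      using assms(1,5) c by (simp_all add: moves_fixing_by_reflection)
    then show ?thesis
      unfolding c_def by (rule moves_fixing_trans)
  qed
qed

end

section \<open>Types of pairs of points\<close>

context unitary_field
begin

definition norm_root :: "'k \<Rightarrow> 'k" where
  "norm_root t = (SOME x. x * x ^ q = t)"

lemma norm_root: "t ^ q = t \<Longrightarrow> norm_root t * norm_root t ^ q = t"
  unfolding norm_root_def by (rule someI_ex) (rule norm_onto_fixed)

lemma norm_root_nonzero: "t ^ q = t \<Longrightarrow> t \<noteq> 0 \<Longrightarrow> norm_root t \<noteq> 0"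
  using norm_root[of t] by auto

lemma norm_root_minus_one: "norm_root (-1) * norm_root (-1) ^ q = -1"
  by (rule norm_root) (simp add: frob_minus)

text \<open>The complete invariant of a pair of non-degenerate points under \<open>SU\<close>: whether they are
  orthogonal and, if not, the ratio of the Gram determinant to \<open>|herm q a b|\<^sup>2\<close> (shifted by one).
  It is well defined on points because it is invariant under scaling either vector.\<close>
definition pair_type :: "'k^'n \<Rightarrow> 'k^'n \<Rightarrow> 'k option" where
  "pair_type a b = (if herm q a b = 0 then None
     else Some (herm q a a * herm q b b / (herm q a b * herm q b a) - 1))"

definition admissible_type :: "'k option \<Rightarrow> bool" where
  "admissible_type t \<longleftrightarrow> (case t of None \<Rightarrow> True | Some r \<Rightarrow> r ^ q = r \<and> 1 + r \<noteq> 0)"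

lemma pair_type_Some:
  "herm q a b \<noteq> 0 \<Longrightarrow> pair_type a b = Some (herm q a a * herm q b b / (herm q a b * herm q a b ^ q) - 1)"
  by (simp add: pair_type_def herm_sym[of b a])

lemma pair_type_unitary: "unitary A \<Longrightarrow> pair_type (A *v a) (A *v b) = pair_type a b"
  by (simp add: pair_type_def unitary_def)

lemma pair_type_scale:
  assumes "c \<noteq> 0" "d \<noteq> 0"
  shows "pair_type (c *s a) (d *s b) = pair_type a b"
proof -
  have "c ^ q \<noteq> 0" "d ^ q \<noteq> 0"
    using assms by auto
  then show ?thesis
    using assms by (simp add: pair_type_def herm_scale_left herm_scale_right field_simps)
qed

lemma admissible_pair_type:
  assumes "herm q a a \<noteq> 0" "herm q b b \<noteq> 0"
  shows "admissible_type (pair_type a b)"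
proof (cases "herm q a b = 0")
  case False
  define h where "h = herm q a b"
  have "h ^ q \<noteq> 0"
    using False by (simp add: h_def)
  define g where "g = herm q a a * herm q b b / (h * h ^ q)"
  have "g ^ q = g" "g \<noteq> 0"
    using assms False \<open>h ^ q \<noteq> 0\<close>
    by (simp_all add: g_def power_divide power_mult_distrib herm_self_frob h_def mult.commute)
  then have "(g - 1) ^ q = g - 1" "1 + (g - 1) \<noteq> 0"
    by (simp_all add: frob_diff)
  then show ?thesis
    using False by (simp add: admissible_type_def pair_type_Some g_def h_def)
qed (simp add: admissible_type_def pair_type_def)

lemma pair_type_span1_left:
  assumes "span1 a' = span1 a" "a' \<noteq> 0"
  shows "pair_type a' b = pair_type a b"
proof -
  obtain c where "a' = c *s a"
    using span1_eqD assms(1) by metis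
  moreover from this have "c \<noteq> 0"
    using assms(2) by auto
  ultimately show ?thesis
    using pair_type_scale[of c 1 a b] by simp
qed

lemma pair_type_span1_right:
  assumes "span1 b' = span1 b" "b' \<noteq> 0"
  shows "pair_type a b' = pair_type a b"
proof -
  obtain c where "b' = c *s b"
    using span1_eqD assms(1) by metis
  moreover from this have "c \<noteq> 0"
    using assms(2) by auto
  ultimately show ?thesis
    using pair_type_scale[of 1 c a b] by simp
qed

lemma pair_type_axis_plus:
  assumes "w $ i = 0"
  shows "pair_type (axis i 1) (axis i 1 + w) = Some (herm q w w)"
proof -
  have "herm q (axis i 1) (axis i 1 + w) = 1" "herm q (axis i 1 + w) (axis i 1 + w) = 1 + herm q w w"
    using assms by (simp_all add: herm_add_left herm_add_right herm_axis_left herm_axis_right)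
  moreover have "herm q (axis i 1) (axis i (1::'k)) = 1"
    by (simp add: herm_axis_left)
  ultimately show ?thesis
    by (simp add: pair_type_Some)
qed

definition common_neighbour :: "'k option \<Rightarrow> 'k^'n \<Rightarrow> 'k^'n \<Rightarrow> 'k^'n \<Rightarrow> bool" where
  "common_neighbour T a b z \<longleftrightarrow> herm q z z \<noteq> 0 \<and> pair_type a z = T \<and> pair_type z b = T"

lemma common_neighbour_distinct:
  assumes "common_neighbour T a b z" "pair_type a b \<noteq> T"
  shows "span1 z \<noteq> span1 a" "span1 z \<noteq> span1 b"
proof -
  have "z \<noteq> 0"
    using assms(1) by (auto simp: common_neighbour_def)
  then show "span1 z \<noteq> span1 a" "span1 z \<noteq> span1 b"
    using assms pair_type_span1_left[of z a b] pair_type_span1_right[of z b a]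
    by (auto simp: common_neighbour_def)
qed

lemma common_neighbour_unitary:
  "unitary A \<Longrightarrow> common_neighbour T (A *v a) (A *v b) (A *v z) \<longleftrightarrow> common_neighbour T a b z"
  by (simp add: common_neighbour_def pair_type_unitary) (simp add: unitary_def)

lemma common_neighbour_scale:
  "c \<noteq> 0 \<Longrightarrow> d \<noteq> 0 \<Longrightarrow> common_neighbour T (c *s a) (d *s b) z \<longleftrightarrow> common_neighbour T a b z"
  using pair_type_scale[of c 1 a z] pair_type_scale[of 1 d z b] by (simp add: common_neighbour_def)

end

section \<open>Normal form of a pair of points\<close>

locale unitary_space = unitary_field q field for q and field :: "'k::{field,finite} itself" +
  fixes i1 i2 i3 i4 :: "'n::finite"
  assumes distinct_indices: "distinct [i1, i2, i3, i4]"
begin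

lemma indices_neq [simp]:
  "i1 \<noteq> i2" "i1 \<noteq> i3" "i1 \<noteq> i4" "i2 \<noteq> i3" "i2 \<noteq> i4" "i3 \<noteq> i4"
  "i2 \<noteq> i1" "i3 \<noteq> i1" "i4 \<noteq> i1" "i3 \<noteq> i2" "i4 \<noteq> i2" "i4 \<noteq> i3"
  using distinct_indices by auto

definition vec_of_norm :: "'k \<Rightarrow> 'k^'n" where
  "vec_of_norm s = (if s = 0 then axis i2 1 + axis i3 (norm_root (-1)) else axis i2 (norm_root s))"

definition type_rep :: "'k option \<Rightarrow> 'k^'n" where
  "type_rep t = (case t of None \<Rightarrow> axis i2 1 | Some s \<Rightarrow> axis i1 1 + vec_of_norm s)"

lemma vec_of_norm_component: "p \<noteq> i2 \<Longrightarrow> p \<noteq> i3 \<Longrightarrow> vec_of_norm s $ p = 0"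
  by (simp add: vec_of_norm_def)

lemma vec_of_norm_i2: "s ^ q = s \<Longrightarrow> vec_of_norm s $ i2 \<noteq> 0"
  by (simp add: vec_of_norm_def norm_root_nonzero)

lemma herm_vec_of_norm: "s ^ q = s \<Longrightarrow> herm q (vec_of_norm s) (vec_of_norm s) = s"
  using norm_root_minus_one norm_root[of s]
  by (simp add: vec_of_norm_def herm_add_left herm_add_right herm_axis_left herm_axis_right)

lemma type_rep_component:
  "type_rep t $ i4 = 0" "admissible_type t \<Longrightarrow> type_rep t $ i2 \<noteq> 0"
  by (auto simp: type_rep_def admissible_type_def vec_of_norm_component vec_of_norm_i2 split: option.split)

lemma herm_type_rep_Some:
  "s ^ q = s \<Longrightarrow> herm q (axis i1 1) (type_rep (Some s)) = 1"
  "s ^ q = s \<Longrightarrow> herm q (type_rep (Some s)) (type_rep (Some s)) = 1 + s"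
  by (simp_all add: type_rep_def herm_add_left herm_add_right herm_axis_left herm_axis_right
      herm_vec_of_norm vec_of_norm_component)

lemma type_rep_nondeg: "admissible_type t \<Longrightarrow> herm q (type_rep t) (type_rep t) \<noteq> 0"
  by (cases t) (simp_all add: admissible_type_def herm_type_rep_Some, simp add: type_rep_def herm_axis_left)

lemma special_unitary_to_vec_of_norm:
  assumes "w \<noteq> 0" "w $ i1 = 0"
  obtains B where "special_unitary B" "B *v axis i1 1 = axis i1 1"
    "B *v w = vec_of_norm (herm q w w)"
proof -
  define s where "s = herm q w w"
  have "s ^ q = s"
    by (simp add: s_def herm_self_frob)
  have e: "herm q (axis i1 1) w = 0"
    using assms(2) by (simp add: herm_axis_left)
  have "moves_fixing (axis i1 1) w (vec_of_norm s)"
  proof (cases "s = 0")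
    case True
    then show ?thesis
      using moves_fixing_isotropic[of w "norm_root (-1)" i2 i3 "axis i1 1"] assms e norm_root_minus_one
      by (simp add: vec_of_norm_def s_def)
  next
    case False
    then show ?thesis
      using moves_fixing_to_axis[of w "norm_root s" "axis i1 1" i2] e norm_root[OF \<open>s ^ q = s\<close>]
        norm_root_nonzero[OF \<open>s ^ q = s\<close>]
      by (simp add: vec_of_norm_def s_def)
  qed
  then obtain B where "special_unitary B" "B *v axis i1 1 = axis i1 1" "B *v w = vec_of_norm s"
    by (rule special_unitary_if_moves_fixing[where l = i4]) (simp_all add: vec_of_norm_component)
  then show ?thesis
    using that by (simp add: s_def)
qed

lemma special_unitary_to_axis:
  fixes a :: "'k^'n"
  assumes "herm q a a \<noteq> 0"
  obtains B g where "special_unitary B" "g \<noteq> 0" "B *v a = g *s axis i1 1"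
proof -
  define g where "g = norm_root (herm q a a)"
  have "g * g ^ q = herm q a a" "g \<noteq> 0"
    using norm_root norm_root_nonzero assms herm_self_frob by (auto simp: g_def)
  then have "moves_fixing 0 a (axis i1 g)"
    by (intro moves_fixing_to_axis) simp_all
  then obtain B where "special_unitary B" "B *v a = axis i1 g"
    by (rule special_unitary_if_moves_fixing[where l = i2]) simp_all
  then show ?thesis
    using that[of B g] \<open>g \<noteq> 0\<close> by (simp add: axis_eq_scale[of i1 g])
qed

lemma normal_form_orthogonal_to_axis:
  fixes b :: "'k^'n"
  assumes "herm q b b \<noteq> 0" "b $ i1 = 0"
  obtains B d where "special_unitary B" "d \<noteq> 0" "B *v axis i1 1 = axis i1 1"
    "B *v b = d *s type_rep (pair_type (axis i1 1) b)"
proof -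
  have "b \<noteq> 0"
    using assms(1) by auto
  then obtain B where B: "special_unitary B" "B *v axis i1 1 = axis i1 1"
      "B *v b = vec_of_norm (herm q b b)"
    using special_unitary_to_vec_of_norm assms(2) by blast
  have "herm q b b ^ q = herm q b b"
    by (rule herm_self_frob)
  then have "B *v b = norm_root (herm q b b) *s type_rep (pair_type (axis i1 1) b)"
    "norm_root (herm q b b) \<noteq> 0"
    using B(3) assms
    by (simp_all add: vec_of_norm_def type_rep_def pair_type_def herm_axis_left norm_root_nonzero
        axis_eq_scale[of i2 "norm_root _"])
  then show ?thesis
    using that B(1,2) by blast
qed

lemma normal_form_off_axis:
  fixes b :: "'k^'n"
  assumes "b $ i1 \<noteq> 0" "span1 b \<noteq> span1 (axis i1 1)"
  obtains B d where "special_unitary B" "d \<noteq> 0" "B *v axis i1 1 = axis i1 1"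
    "B *v b = d *s type_rep (pair_type (axis i1 1) b)"
proof -
  define al where "al = b $ i1"
  define w where "w = inverse al *s b - axis i1 1"
  have "al \<noteq> 0" "w $ i1 = 0"
    using assms(1) by (simp_all add: w_def al_def)
  have b_eq: "al *s (axis i1 1 + w) = b"
    using \<open>al \<noteq> 0\<close> by (simp add: w_def vector_smult_assoc)
  have "w \<noteq> 0"
  proof
    assume "w = 0"
    then have "b = al *s axis i1 1"
      using b_eq by simp
    then show False
      using assms(2) by (simp add: span1_scale[OF \<open>al \<noteq> 0\<close>])
  qed
  have "pair_type (axis i1 1) b = pair_type (1 *s axis i1 1) (al *s (axis i1 1 + w))"
    by (simp only: b_eq vector_smult_lid)
  also have "\<dots> = Some (herm q w w)"
    by (rule trans[OF pair_type_scale[OF one_neq_zero \<open>al \<noteq> 0\<close>] pair_type_axis_plus[OF \<open>w $ i1 = 0\<close>]])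
  finally have "pair_type (axis i1 1) b = Some (herm q w w)" .
  obtain B where B: "special_unitary B" "B *v axis i1 1 = axis i1 1"
      "B *v w = vec_of_norm (herm q w w)"
    using special_unitary_to_vec_of_norm[OF \<open>w \<noteq> 0\<close> \<open>w $ i1 = 0\<close>] by blast
  have "B *v b = al *s (B *v (axis i1 1 + w))"
    by (simp only: vector_scalar_commute flip: b_eq)
  also have "\<dots> = al *s type_rep (pair_type (axis i1 1) b)"
    using B(2,3) \<open>pair_type (axis i1 1) b = Some (herm q w w)\<close>
    by (simp add: type_rep_def matrix_vector_right_distrib)
  finally show ?thesis
    using that B(1,2) \<open>al \<noteq> 0\<close> by blast
qed

lemma normal_form:
  fixes a b :: "'k^'n"
  assumes "herm q a a \<noteq> 0" "herm q b b \<noteq> 0" "span1 a \<noteq> span1 b"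
  obtains A c d where "special_unitary A" "c \<noteq> 0" "d \<noteq> 0" "A *v a = c *s axis i1 1"
    "A *v b = d *s type_rep (pair_type a b)"
proof -
  obtain B1 g where B1: "special_unitary B1" "g \<noteq> 0" "B1 *v a = g *s axis i1 1"
    using special_unitary_to_axis[OF assms(1)] by blast
  then have "unitary B1"
    by (simp add: special_unitary_def)
  define b1 where "b1 = B1 *v b"
  have "herm q b1 b1 \<noteq> 0"
    using assms(2) \<open>unitary B1\<close> by (simp add: b1_def unitary_def)
  moreover have "span1 b1 \<noteq> span1 (axis i1 1)"
    using assms(3) unitary_span1_eq_iff[OF \<open>unitary B1\<close>, of b a] B1(3)
    by (simp add: b1_def span1_scale[OF \<open>g \<noteq> 0\<close>])
  ultimately obtain B2 d where B2: "special_unitary B2" "d \<noteq> 0" "B2 *v axis i1 1 = axis i1 1"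
      "B2 *v b1 = d *s type_rep (pair_type (axis i1 1) b1)"
    using normal_form_orthogonal_to_axis normal_form_off_axis by (cases "b1 $ i1 = 0") blast+
  have "pair_type (axis i1 1) b1 = pair_type (g *s axis i1 1) b1"
    using pair_type_scale[of g 1 "axis i1 1" b1] \<open>g \<noteq> 0\<close> by simp
  also have "\<dots> = pair_type a b"
    using B1(3) pair_type_unitary[OF \<open>unitary B1\<close>, of a b] by (simp add: b1_def)
  finally show ?thesis
    using that[of "B2 ** B1" g d] B1 B2
    by (simp add: special_unitary_matrix_mul b1_def vector_scalar_commute flip: matrix_vector_mul_assoc)
qed

lemma special_unitary_maps_pair_of_same_type:
  fixes a b u v :: "'k^'n"
  assumes "herm q a a \<noteq> 0" "herm q b b \<noteq> 0" "span1 a \<noteq> span1 b"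
    and "herm q u u \<noteq> 0" "herm q v v \<noteq> 0" "span1 u \<noteq> span1 v"
    and "pair_type a b = pair_type u v"
  obtains A where "special_unitary A" "span1 (A *v a) = span1 u" "span1 (A *v b) = span1 v"
proof -
  obtain A1 c1 d1 where A1: "special_unitary A1" "c1 \<noteq> 0" "d1 \<noteq> 0"
      "A1 *v a = c1 *s axis i1 1" "A1 *v b = d1 *s type_rep (pair_type a b)"
    using normal_form[OF assms(1-3)] by blast
  obtain A2 c2 d2 where A2: "special_unitary A2" "c2 \<noteq> 0" "d2 \<noteq> 0"
      "A2 *v u = c2 *s axis i1 1" "A2 *v v = d2 *s type_rep (pair_type a b)"
    using normal_form[OF assms(4-6)] assms(7) by metis
  define C where "C = conj_transpose A2"
  have C: "special_unitary C" "C *v (A2 *v x) = x" for x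
    using A2(1) special_unitary_conj_transpose unitary_conj_transpose_mult
    by (auto simp: C_def special_unitary_def)
  have scale: "span1 (C *v (c *s x)) = span1 (C *v x)" if "c \<noteq> 0" for c x
    using that by (simp add: vector_scalar_commute span1_scale)
  have "span1 ((C ** A1) *v a) = span1 u" "span1 ((C ** A1) *v b) = span1 v"
    using A1(2-5) A2(2-5) C(2)[of u] C(2)[of v] scale
    by (metis matrix_vector_mul_assoc)+
  then show ?thesis
    using that special_unitary_matrix_mul[OF C(1) A1(1)] by blast
qed

lemma common_neighbour_orthogonal:
  "common_neighbour None (axis i1 1) (type_rep t) (axis i4 1)"
  by (simp add: common_neighbour_def pair_type_def herm_axis_left herm_axis_right type_rep_component)

lemma common_neighbour_of_axis_i2:
  fixes r :: 'k
  assumes "r ^ q = r" "1 + r \<noteq> 0"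
  shows "\<exists>z. common_neighbour (Some r) (axis i1 1) (type_rep None) z"
proof -
  have "(r - 1) ^ q = r - 1"
    using assms(1) by (simp add: frob_diff)
  then obtain al where al: "al * al ^ q = r - 1"
    using norm_onto_fixed by blast
  define z :: "'k^'n" where "z = axis i1 1 + axis i2 1 + axis i3 al"
  note herm_simps = herm_add_left herm_add_right herm_axis_left herm_axis_right
  have "herm q z z = 1 + r" "herm q (axis i1 1) z = 1" "herm q z (axis i2 1) = 1"
    using al by (simp_all add: z_def herm_simps algebra_simps)
  then have "common_neighbour (Some r) (axis i1 1) (type_rep None) z"
    using assms(2) by (simp add: common_neighbour_def type_rep_def pair_type_Some herm_axis_left)
  then show ?thesis ..
qed

text \<open>The neighbour is \<open>z = axis i1 1 + \<beta> *s vec_of_norm s + axis i4 \<alpha>\<close>, where \<open>\<beta>\<close> makes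
  \<open>herm q z (type_rep (Some s)) = 1 + \<beta> * s\<close> have norm \<open>1 + s\<close>, and \<open>\<alpha>\<close> then adjusts
  \<open>herm q z z\<close> to \<open>1 + r\<close>.\<close>
lemma common_neighbour_of_type_rep_Some:
  fixes r s :: 'k
  assumes "r ^ q = r" "1 + r \<noteq> 0" "s ^ q = s" "1 + s \<noteq> 0"
  shows "\<exists>z. common_neighbour (Some r) (axis i1 1) (type_rep (Some s)) z"
proof -
  define c where "c = vec_of_norm s"
  have c: "herm q c c = s" "c $ i1 = 0" "c $ i4 = 0"
    using assms(3) by (simp_all add: c_def herm_vec_of_norm vec_of_norm_component)
  obtain \<beta> where \<beta>: "(1 + \<beta> * s) * (1 + \<beta> * s) ^ q = 1 + s"
    using exists_norm_one_plus_multiple[OF assms(3,4)] by blast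
  then have "1 + \<beta> * s \<noteq> 0"
    using assms(4) by auto
  have "(r - \<beta> * \<beta> ^ q * s) ^ q = r - \<beta> * \<beta> ^ q * s"
    using assms(1,3) by (simp add: frob_diff power_mult_distrib)
  then obtain \<alpha> where \<alpha>: "\<alpha> * \<alpha> ^ q = r - \<beta> * \<beta> ^ q * s"
    using norm_onto_fixed by blast
  define z where "z = axis i1 1 + \<beta> *s c + axis i4 \<alpha>"
  note herm_simps = herm_add_left herm_add_right herm_axis_left herm_axis_right
    herm_scale_left herm_scale_right
  have "herm q z z = 1 + r" "herm q (axis i1 1) z = 1"
    using c \<alpha> by (simp_all add: z_def herm_simps algebra_simps)
  moreover have "herm q z (type_rep (Some s)) = 1 + \<beta> * s"
    using c by (simp add: z_def type_rep_def herm_simps flip: c_def)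
  moreover have "herm q (axis i1 1) (axis i1 (1::'k)) = 1"
    by (simp add: herm_axis_left)
  ultimately have "common_neighbour (Some r) (axis i1 1) (type_rep (Some s)) z"
    using \<beta> \<open>1 + \<beta> * s \<noteq> 0\<close> assms
    by (simp add: common_neighbour_def pair_type_Some herm_type_rep_Some)
  then show ?thesis ..
qed

lemma common_neighbour_of_normal_form:
  assumes "admissible_type T" "admissible_type t"
  shows "\<exists>z. common_neighbour T (axis i1 1) (type_rep t) z"
proof (cases T)
  case None
  then show ?thesis
    using common_neighbour_orthogonal by blast
next
  case (Some r)
  then show ?thesis
    using assms common_neighbour_of_axis_i2 common_neighbour_of_type_rep_Some
    by (cases t) (auto simp: admissible_type_def)
qed

lemma common_neighbour_exists:
  fixes a b :: "'k^'n"
  assumes "herm q a a \<noteq> 0" "herm q b b \<noteq> 0" "span1 a \<noteq> span1 b"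
    and "admissible_type T"
  shows "\<exists>z. common_neighbour T a b z"
proof -
  obtain A c d where A: "special_unitary A" "c \<noteq> 0" "d \<noteq> 0" "A *v a = c *s axis i1 1"
      "A *v b = d *s type_rep (pair_type a b)"
    using normal_form[OF assms(1-3)] by blast
  then have "unitary A"
    by (simp add: special_unitary_def)
  obtain z where "common_neighbour T (axis i1 1) (type_rep (pair_type a b)) z"
    using common_neighbour_of_normal_form[OF assms(4) admissible_pair_type[OF assms(1,2)]] by blast
  then have "common_neighbour T (A *v a) (A *v b) (A *v (conj_transpose A *v z))"
    using A(2-5) by (simp add: common_neighbour_scale unitary_mult_conj_transpose[OF \<open>unitary A\<close>])
  then show ?thesis
    using common_neighbour_unitary[OF \<open>unitary A\<close>] by blast
qed

end

section \<open>Orbital graphs\<close>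

lemma gdist_le: "reach E k x y \<Longrightarrow> gdist E x y \<le> enat k"
  unfolding gdist_def by (auto intro: Least_le)

lemma gdist_ge_2:
  assumes "x \<noteq> y" "{x, y} \<notin> E"
  shows "2 \<le> gdist E x y"
proof (cases "\<exists>k. reach E k x y")
  case True
  have "\<not> reach E 0 x y" "\<not> reach E 1 x y"
    using assms by auto
  then have "2 \<le> (LEAST k. reach E k x y)"
    using LeastI_ex[OF True] by (metis One_nat_def less_2_cases not_less)
  then show ?thesis
    using True by (simp add: gdist_def numeral_eq_enat)
qed (simp add: gdist_def)

context unitary_field
begin

lemma span1_in_nondeg_points: "herm q (v::'k^'n) v \<noteq> 0 \<Longrightarrow> span1 v \<in> nondeg_points q"
  by (auto simp: nondeg_points_def)

lemma nondeg_pointsE: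
  assumes "P \<in> nondeg_points q"
  obtains v :: "'k^'n" where "P = span1 v" "herm q v v \<noteq> 0"
  using assms by (auto simp: nondeg_points_def)

lemma special_unitary_in_SU: "special_unitary (A::'k^'n^'n) \<Longrightarrow> (\<lambda>v. A *v v) \<in> SU q"
  unfolding SU_def special_unitary_def unitary_def by blast

lemma GammaU_orthogonal:
  assumes "h \<in> GammaU q" "herm q x y = (0::'k)"
  shows "herm q (h x) (h y) = 0"
proof -
  obtain A \<sigma> m where h: "h = (\<lambda>v. A *v (\<chi> i. \<sigma> (v $ i)))" "field_aut \<sigma>"
      "\<forall>u v. herm q (A *v (\<chi> i. \<sigma> (u $ i))) (A *v (\<chi> i. \<sigma> (v $ i))) = m * \<sigma> (herm q u v)"
    using assms(1) unfolding GammaU_def by blast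
  have "\<sigma> 0 = 0"
    using h(2) unfolding field_aut_def by (metis add_0 add_cancel_right_right)
  then show ?thesis
    using h(1,3) assms(2) by simp
qed

lemma orbit_of_orthogonal_pair:
  fixes a b c d :: "'k^'n"
  assumes "G \<subseteq> induced (nondeg_points q) ` GammaU q" "g \<in> G"
    and "herm q a a \<noteq> 0" "herm q b b \<noteq> 0" "herm q a b = 0"
    and "g ` {span1 a, span1 b} = {span1 c, span1 d}"
  shows "herm q c d = 0"
proof -
  obtain h where h: "h \<in> GammaU q" "g = induced (nondeg_points q) h"
    using assms(1,2) by blast
  have orth: "herm q (h x) (h y) = 0" if xy: "x \<in> span1 a" "y \<in> span1 b" for x y
  proof -
    obtain s t where "x = s *s a" "y = t *s b"
      using xy unfolding span1_eq_range by blast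
    then show ?thesis
      using assms(5) GammaU_orthogonal[OF h(1)] by (simp add: herm_scale_left herm_scale_right)
  qed
  have "{h ` span1 a, h ` span1 b} = {span1 c, span1 d}"
    using assms(3,4,6) by (simp add: h(2) induced_def span1_in_nondeg_points)
  then consider "h ` span1 a = span1 c" "h ` span1 b = span1 d"
    | "h ` span1 a = span1 d" "h ` span1 b = span1 c"
    by (auto simp: doubleton_eq_iff)
  then show ?thesis
  proof cases
    case 1
    then show ?thesis
      using orth span1_self[of c] span1_self[of d] by (metis imageE)
  next
    case 2
    then show ?thesis
      using orth span1_self[of c] span1_self[of d] herm_sym[of c d] by (metis imageE frob_0)
  qed
qed

end

context unitary_space
begin

context
  fixes G :: "(('k^'n) set \<Rightarrow> ('k^'n) set) set"
  assumes SU_subset: "induced (nondeg_points q) ` SU q \<subseteq> G"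
begin

lemma orbital_edge_of_same_type:
  fixes a b u v :: "'k^'n"
  assumes "herm q a a \<noteq> 0" "herm q b b \<noteq> 0" "span1 a \<noteq> span1 b"
    and "herm q u u \<noteq> 0" "herm q v v \<noteq> 0" "span1 u \<noteq> span1 v"
    and "pair_type a b = pair_type u v"
  shows "{span1 a, span1 b} \<in> {g ` {span1 u, span1 v} | g. g \<in> G}"
proof -
  obtain A where A: "special_unitary A" "span1 (A *v u) = span1 a" "span1 (A *v v) = span1 b"
    using special_unitary_maps_pair_of_same_type[OF assms(4-6,1-3) assms(7)[symmetric]] by blast
  define g where "g = induced (nondeg_points q) (\<lambda>w. A *v w)"
  have "g \<in> G"
    using SU_subset special_unitary_in_SU[OF A(1)] by (auto simp: g_def)
  moreover have "g ` {span1 u, span1 v} = {span1 a, span1 b}"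
    using assms(4,5) A(2,3)
    by (simp add: g_def induced_def span1_in_nondeg_points image_span1_matrix)
  ultimately show ?thesis
    by blast
qed

lemma gdist_orbital_le_2:
  fixes u v :: "'k^'n"
  assumes "herm q u u \<noteq> 0" "herm q v v \<noteq> 0" "span1 u \<noteq> span1 v"
    and E: "E = {g ` {span1 u, span1 v} | g. g \<in> G}"
    and "x \<in> nondeg_points q" "y \<in> nondeg_points q"
  shows "gdist E x y \<le> 2"
proof -
  obtain a b :: "'k^'n" where ab: "x = span1 a" "y = span1 b" "herm q a a \<noteq> 0" "herm q b b \<noteq> 0"
    using assms(5,6) by (metis nondeg_pointsE)
  note edge = orbital_edge_of_same_type[OF _ _ _ assms(1-3), folded E]
  have "\<exists>k \<le> 2. reach E k x y"
  proof (cases "x = y")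
    case True
    then show ?thesis
      by (intro exI[of _ 0]) simp
  next
    case False
    show ?thesis
    proof (cases "pair_type a b = pair_type u v")
      case True
      then show ?thesis
        using False ab edge by (intro exI[of _ 1]) simp
    next
      case False
      then obtain z where "common_neighbour (pair_type u v) a b z"
        using common_neighbour_exists[of a b "pair_type u v"] ab \<open>x \<noteq> y\<close>
          admissible_pair_type[OF assms(1,2)] by blast
      then have "{x, span1 z} \<in> E" "{span1 z, y} \<in> E"
        using ab edge common_neighbour_distinct[of "pair_type u v" a b z] False
        unfolding common_neighbour_def by metis+
      then show ?thesis
        by (intro exI[of _ 2]) (auto simp: numeral_2_eq_2)
    qed
  qed
  then obtain k where "k \<le> 2" "reach E k x y"
    by blast
  then show ?thesis
    using gdist_le[of E k x y] by (metis enat_ord_simps(1) numeral_eq_enat order_trans)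
qed

lemma graph_diam_orbital_le_2:
  assumes "E \<in> orbital_edge_sets (nondeg_points q) G"
  shows "graph_diam (nondeg_points q) E \<le> 2"
proof -
  obtain P Q where PQ: "P \<in> nondeg_points q" "Q \<in> nondeg_points q" "P \<noteq> Q"
      "E = {g ` {P, Q} | g. g \<in> G}"
    using assms unfolding orbital_edge_sets_def card_2_iff by blast
  obtain u :: "'k^'n" where "P = span1 u" "herm q u u \<noteq> 0"
    using PQ(1) by (rule nondeg_pointsE)
  moreover obtain v :: "'k^'n" where "Q = span1 v" "herm q v v \<noteq> 0"
    using PQ(2) by (rule nondeg_pointsE)
  ultimately have "gdist E x y \<le> 2" if "x \<in> nondeg_points q" "y \<in> nondeg_points q" for x y
    using gdist_orbital_le_2[of u v E x y] PQ(3,4) that by simp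
  then show ?thesis
    unfolding graph_diam_def by (auto intro!: SUP_least)
qed

end

lemma action_diam_ge_2:
  fixes G :: "(('k^'n) set \<Rightarrow> ('k^'n) set) set"
  assumes "G \<subseteq> induced (nondeg_points q) ` GammaU q"
  shows "2 \<le> action_diam (nondeg_points q) G"
proof -
  define X where "X = (nondeg_points q :: ('k^'n) set set)"
  define K where "K = type_rep (Some 0)"
  define E where "E = {g ` {span1 (axis i1 1), span1 (axis i2 1)} | g. g \<in> G}"
  have "admissible_type (Some (0::'k))"
    by (simp add: admissible_type_def)
  then have K: "herm q K K \<noteq> 0" "herm q (axis i1 1) K \<noteq> 0" "span1 (axis i1 1) \<noteq> span1 K"
    using type_rep_nondeg herm_type_rep_Some[of 0] span1_neq[of "axis i1 1" i2 K] type_rep_component(2)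
    by (simp_all add: K_def)
  have e: "herm q (axis i 1) (axis i (1::'k)) \<noteq> 0" "span1 (axis i1 1) \<noteq> span1 (axis i2 (1::'k))" for i
    using span1_neq[of "axis i1 1" i2 "axis i2 (1::'k)"] by (auto simp: herm_axis_left)
  have "E \<in> orbital_edge_sets X G"
    unfolding E_def X_def orbital_edge_sets_def
    by (intro CollectI exI[of _ "{span1 (axis i1 1), span1 (axis i2 1)}"]) (simp add: e span1_in_nondeg_points)
  moreover have "{span1 (axis i1 1), span1 K} \<notin> E"
  proof
    assume "{span1 (axis i1 1), span1 K} \<in> E"
    then obtain g where "g \<in> G" "g ` {span1 (axis i1 1), span1 (axis i2 1)} = {span1 (axis i1 1), span1 K}"
      by (auto simp: E_def)
    moreover have "herm q (axis i1 1) (axis i2 (1::'k)) = 0"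
      by (simp add: herm_axis_left)
    ultimately have "herm q (axis i1 1) K = 0"
      using orbit_of_orthogonal_pair[OF assms, of g "axis i1 1" "axis i2 1"] e(1) by blast
    then show False
      using K(2) by simp
  qed
  then have "2 \<le> gdist E (span1 (axis i1 1)) (span1 K)"
    using K(3) by (rule gdist_ge_2[rotated])
  then have "2 \<le> graph_diam X E"
    unfolding graph_diam_def using e K(1) span1_in_nondeg_points
    by (force simp: X_def intro: SUP_upper2)
  ultimately show ?thesis
    unfolding action_diam_def X_def by (force intro: SUP_upper2)
qed

end

lemma exists_four_distinct:
  assumes "4 \<le> CARD('n::finite)"
  obtains i1 i2 i3 i4 :: "'n::finite" where "distinct [i1, i2, i3, i4]"
proof -
  obtain xs :: "'n list" where "distinct xs" "set xs = UNIV"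
    using finite_distinct_list[of "UNIV :: 'n set"] by auto
  then have "4 \<le> length xs"
    using assms distinct_card by metis
  then obtain i1 i2 i3 i4 ys where "xs = i1 # i2 # i3 # i4 # ys"
    by (auto simp: numeral_eq_Suc Suc_le_length_iff)
  then show ?thesis
    using that[of i1 i2 i3 i4] \<open>distinct xs\<close> by simp
qed

theorem mainTheorem10:
  fixes G :: "((('k::{field,finite})^'n) set \<Rightarrow> ('k^'n) set) set"
    and p e q :: nat
  assumes "prime p" and "e \<ge> 1" and "q = p ^ e"
    and "CARD('k) = q ^ 2"
    and "CARD('n) \<ge> 5"
    and "id \<in> G" and "\<forall>a\<in>G. \<forall>b\<in>G. a \<circ> b \<in> G"
    and "induced (nondeg_points q) ` SU q \<subseteq> G"
    and "G \<subseteq> induced (nondeg_points q) ` GammaU q"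
    and "primitive_on (nondeg_points q) G"
  shows "action_diam (nondeg_points q) G = 2"
proof -
  interpret unitary_field q "TYPE('k)"
    using unitary_field_prime_power[OF assms(1)] assms(3,4) by simp
  obtain i1 i2 i3 i4 :: 'n where "distinct [i1, i2, i3, i4]"
    using exists_four_distinct assms(5) by (metis Suc_leD eval_nat_numeral(3))
  then interpret unitary_space q "TYPE('k)" i1 i2 i3 i4
    by unfold_locales
  have "action_diam (nondeg_points q) G \<le> 2"
    unfolding action_diam_def using graph_diam_orbital_le_2[OF assms(8)] by (auto intro: SUP_least)
  moreover have "2 \<le> action_diam (nondeg_points q) G"
    using action_diam_ge_2[OF assms(9)] .
  ultimately show ?thesis
    by simp
qed

end
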